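(* Let $K\ge1$ be an integer and let $s:[0,\infty)\to\mathbb{R}$ be differentiable with $s(0)=s'(0)=0$, convex on $[0,K]$, and with $s(j)\neq0$ for some $j\in\{1,\dots,K\}$. Define $$\mathsf{Eff}_K=\frac{1}{K+1}\cdot\frac{\sum_{j=1}^K(K+1-j)\,s(j)^2}{\sum_{j=1}^K(K+1-j)\,s(j)},\qquad \mathsf{Eff}^{\mathrm{lb}}_k=\frac{1}{k+1}\,s\!\left(\frac{k+1}{2}\right),\ k\ge0.$$ Then $\mathsf{Eff}_K\ge\mathsf{Eff}^{\mathrm{lb}}_K$, and $k\mapsto\mathsf{Eff}^{\mathrm{lb}}_k$ is non-decreasing on $\{0,1,\dots,K\}$. *)

theory Defs
  imports "HOL-Analysis.Analysis"
begin

definition Eff :: "(real \<Rightarrow> real) \<Rightarrow> nat \<Rightarrow> real" where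
  "Eff s K = (1 / (real K + 1)) *
     ((\<Sum>j=1..K. (real K + 1 - real j) * (s (real j))^2) /
      (\<Sum>j=1..K. (real K + 1 - real j) * s (real j)))"

definition Eff_lb :: "(real \<Rightarrow> real) \<Rightarrow> nat \<Rightarrow> real" where
  "Eff_lb s k = (1 / (real k + 1)) * s ((real k + 1) / 2)"

end

theory Submission
  imports Defs
begin

text \<open>
  Convexity together with \<open>s 0 = 0\<close> and \<open>s' 0 = 0\<close> makes \<open>s\<close> non-negative and
  makes the slope \<open>s x / x\<close> non-decreasing; the latter is exactly the monotonicity
  of \<open>Eff_lb\<close>. With \<open>m = s c\<close>, \<open>c = (K + 1) / 2\<close>, the inequality \<open>Eff \<ge> Eff_lb\<close>
  says \<open>\<Sum>j. (K + 1 - j) s(j) (s(j) - m) \<ge> 0\<close>. Pairing \<open>j\<close> with \<open>K + 1 - j\<close>, two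
  points symmetric about \<open>c\<close>, each pair is non-negative: the midpoint inequality
  gives \<open>s(j) + s(K + 1 - j) \<ge> 2m\<close>, and the slope bound at the point below \<open>c\<close>
  compensates for its larger weight.
\<close>

lemma convex_on_origin_chord:
  fixes s :: "real \<Rightarrow> real"
  assumes cv: "convex_on {0..L} s" and s0: "s 0 = 0"
    and "0 \<le> x" "x \<le> y" "y \<le> L" "0 < y"
  shows "s x * y \<le> x * s y"
proof -
  define t where "t = x / y"
  have t: "0 \<le> t" "t \<le> 1" using assms by (auto simp: t_def)
  have "s ((1 - t) *\<^sub>R 0 + t *\<^sub>R y) \<le> (1 - t) * s 0 + t * s y"
    by (rule convex_onD[OF cv]) (use t assms in auto)
  moreover have "(1 - t) *\<^sub>R 0 + t *\<^sub>R y = x" using assms by (simp add: t_def)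
  ultimately have "s x \<le> x / y * s y" using s0 by (simp add: t_def)
  thus ?thesis using assms by (simp add: field_simps)
qed

lemma convex_on_midpoint:
  fixes s :: "real \<Rightarrow> real"
  assumes cv: "convex_on A s" and "x \<in> A" "y \<in> A"
  shows "2 * s ((x + y) / 2) \<le> s x + s y"
proof -
  have "s ((1 - 1/2) *\<^sub>R x + (1/2) *\<^sub>R y) \<le> (1 - 1/2) * s x + (1/2) * s y"
    by (rule convex_onD[OF cv]) (use assms in auto)
  moreover have "(1 - 1/2) *\<^sub>R x + (1/2::real) *\<^sub>R y = (x + y) / 2" by simp
  ultimately have "s ((x + y) / 2) \<le> (1 - 1/2) * s x + (1/2) * s y" by metis
  then show ?thesis by simp
qed

lemma convex_on_nonneg_if_flat_at_0:
  fixes s :: "real \<Rightarrow> real"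
  assumes cv: "convex_on {0..L} s" and s0: "s 0 = 0"
    and deriv: "(s has_real_derivative 0) (at 0 within {0..})"
    and x: "0 \<le> x" "x \<le> L"
  shows "0 \<le> s x"
proof (rule ccontr)
  assume "\<not> 0 \<le> s x"
  then have "0 < x" and slope_neg: "s x / x < 0"
    using x s0 by (cases "x = 0"; simp add: divide_neg_pos)+
  have "((\<lambda>y. s y / y) \<longlongrightarrow> 0) (at 0 within {0..})"
    using deriv s0 unfolding has_field_derivative_iff by simp
  then have "eventually (\<lambda>y. dist (s y / y) 0 < - (s x / x)) (at 0 within {0..})"
    by (rule tendstoD) (use slope_neg in linarith)
  then obtain e where "e > 0"
    and e: "\<And>y. 0 \<le> y \<Longrightarrow> y \<noteq> 0 \<Longrightarrow> y < e \<Longrightarrow> \<bar>s y / y\<bar> < - (s x / x)"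
    unfolding eventually_at by (auto simp: dist_real_def)
  define y where "y = min x (e / 2)"
  have y: "0 < y" "y \<le> x" "y < e" using \<open>0 < x\<close> \<open>e > 0\<close> by (auto simp: y_def)
  have "s y * x \<le> y * s x" using convex_on_origin_chord[OF cv s0, of y x] y x by auto
  then have "s y / y \<le> s x / x" using y \<open>0 < x\<close> by (simp add: field_simps)
  with e[of y] y show False by linarith
qed

text \<open>Each point is weighted by the position of its reflection, as in \<open>Eff\<close>.\<close>

lemma convex_on_reflected_pair_nonneg:
  fixes s :: "real \<Rightarrow> real"
  assumes cv: "convex_on {0..L} s" and s0: "s 0 = 0" and sc: "0 \<le> s c"
    and x: "0 < x" "x \<le> c" "2 * c - x \<le> L"
  shows "0 \<le> (2 * c - x) * s x * (s x - s c) + x * s (2 * c - x) * (s (2 * c - x) - s c)"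
proof -
  define a b m where "a = s x" and "b = s (2 * c - x)" and "m = s c"
  have "a * c \<le> x * m"
    using convex_on_origin_chord[OF cv s0, of x c] x by (simp add: a_def m_def)
  moreover have "x * m \<le> c * m" using x sc by (intro mult_right_mono) (auto simp: m_def)
  ultimately have "a * c \<le> m * c" by (simp add: mult.commute)
  then have am: "a \<le> m" using x by simp
  have bm: "2 * m - a \<le> b"
    using convex_on_midpoint[OF cv, of x "2 * c - x"] x by (simp add: a_def b_def m_def)
  have "b * (b - m) - (2 * m - a) * (m - a) = (b - (2 * m - a)) * (b + m - a)"
    by (simp add: algebra_simps)
  also have "\<dots> \<ge> 0" using am bm sc by (simp add: m_def)
  finally have "x * ((2 * m - a) * (m - a)) \<le> x * (b * (b - m))"
    using x by (intro mult_left_mono) auto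
  moreover have "(2 * c - x) * a * (a - m) + x * ((2 * m - a) * (m - a)) = 2 * (m - a) * (x * m - a * c)"
    by (simp add: algebra_simps)
  moreover have "0 \<le> 2 * (m - a) * (x * m - a * c)"
    using am \<open>a * c \<le> x * m\<close> by simp
  ultimately show ?thesis by (simp add: a_def b_def m_def algebra_simps)
qed

lemma sum_nonneg_by_reflection:
  fixes f :: "nat \<Rightarrow> 'a::linordered_idom"
  assumes "\<And>j. j \<in> {1..K} \<Longrightarrow> 0 \<le> f j + f (K + 1 - j)"
  shows "0 \<le> (\<Sum>j=1..K. f j)"
proof -
  have "(\<Sum>j=1..K. f (K + 1 - j)) = (\<Sum>j=1..K. f j)"
    using sum.atLeastAtMost_rev[of f 1 K] by (simp add: add.commute)
  then have "2 * (\<Sum>j=1..K. f j) = (\<Sum>j=1..K. f j + f (K + 1 - j))"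
    by (simp add: sum.distrib)
  also have "\<dots> \<ge> 0" using assms by (intro sum_nonneg) auto
  finally show ?thesis by simp
qed

lemma convex_on_weighted_excess_nonneg:
  fixes s :: "real \<Rightarrow> real" and K :: nat
  defines "c \<equiv> (real K + 1) / 2"
  assumes cv: "convex_on {0..real K} s" and s0: "s 0 = 0" and sc: "0 \<le> s c"
  shows "0 \<le> (\<Sum>j=1..K. (real K + 1 - real j) * s (real j) * (s (real j) - s c))"
    (is "0 \<le> (\<Sum>j=1..K. ?f j)")
proof (rule sum_nonneg_by_reflection)
  fix j assume j: "j \<in> {1..K}"
  have reflect: "real (K + 1 - j) = 2 * c - real j" using j by (simp add: c_def of_nat_diff)
  have pair: "0 \<le> ?f i + ?f (K + 1 - i)" if i: "i \<in> {1..K}" "real i \<le> c" for i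
  proof -
    have "2 * c - real i = real K + 1 - real i" "real (K + 1 - i) = real K + 1 - real i"
      using i by (auto simp: c_def of_nat_diff)
    then show ?thesis
      using convex_on_reflected_pair_nonneg[OF cv s0 sc, of "real i"] i by (simp add: add.commute)
  qed
  show "0 \<le> ?f j + ?f (K + 1 - j)"
  proof (cases "real j \<le> c")
    case False
    then have "0 \<le> ?f (K + 1 - j) + ?f (K + 1 - (K + 1 - j))"
      using j reflect by (intro pair) auto
    then show ?thesis using j by (simp add: add.commute)
  qed (use pair j in auto)
qed

lemma Eff_lb_le_Eff:
  fixes s :: "real \<Rightarrow> real"
  assumes "K \<ge> 1" and cv: "convex_on {0..real K} s" and s0: "s 0 = 0"
    and nonneg: "\<And>x. 0 \<le> x \<Longrightarrow> x \<le> real K \<Longrightarrow> 0 \<le> s x"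
    and nonzero: "\<exists>j\<in>{1..K}. s (real j) \<noteq> 0"
  shows "Eff_lb s K \<le> Eff s K"
proof -
  define m where "m = s ((real K + 1) / 2)"
  define N where "N = (\<Sum>j=1..K. (real K + 1 - real j) * (s (real j))\<^sup>2)"
  define D where "D = (\<Sum>j=1..K. (real K + 1 - real j) * s (real j))"
  have "0 \<le> m" using nonneg \<open>K \<ge> 1\<close> by (simp add: m_def)
  have "N - m * D = (\<Sum>j=1..K. (real K + 1 - real j) * s (real j) * (s (real j) - m))"
    unfolding N_def D_def sum_distrib_left sum_subtractf[symmetric]
    by (intro sum.cong) (auto simp: algebra_simps power2_eq_square)
  also have "\<dots> \<ge> 0"
    using convex_on_weighted_excess_nonneg[OF cv s0] \<open>0 \<le> m\<close> by (simp add: m_def)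
  finally have "m * D \<le> N" by simp
  from nonzero obtain j0 where j0: "j0 \<in> {1..K}" "s (real j0) \<noteq> 0" by blast
  have "0 < (real K + 1 - real j0) * s (real j0)"
    using nonneg[of "real j0"] j0 by force
  then have "0 < D" unfolding D_def
    using nonneg by (intro sum_pos2[OF _ j0(1)]) auto
  with \<open>m * D \<le> N\<close> have "m \<le> N / D" by (simp add: field_simps)
  then show ?thesis
    unfolding Eff_def Eff_lb_def N_def[symmetric] D_def[symmetric] m_def[symmetric]
    by (intro mult_left_mono) auto
qed

lemma Eff_lb_mono:
  fixes s :: "real \<Rightarrow> real"
  assumes cv: "convex_on {0..L} s" and s0: "s 0 = 0"
    and "k1 \<le> k2" "(real k2 + 1) / 2 \<le> L"
  shows "Eff_lb s k1 \<le> Eff_lb s k2"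
proof -
  define x y where "x = (real k1 + 1) / 2" and "y = (real k2 + 1) / 2"
  have "s x * y \<le> x * s y"
    using convex_on_origin_chord[OF cv s0, of x y] assms by (auto simp: x_def y_def)
  then have "s x / (2 * x) \<le> s y / (2 * y)" by (simp add: x_def y_def field_simps)
  then show ?thesis unfolding Eff_lb_def x_def y_def by (simp add: field_simps)
qed

theorem mainTheorem5:
  fixes s :: "real \<Rightarrow> real" and K :: nat
  assumes "K \<ge> 1"
    and "\<forall>x\<ge>0. s differentiable (at x within {0..})"
    and "s 0 = 0"
    and "(s has_real_derivative 0) (at 0 within {0..})"
    and "convex_on {0..real K} s"
    and "\<exists>j\<in>{1..K}. s (real j) \<noteq> 0"
  shows "Eff s K \<ge> Eff_lb s K \<and>
         (\<forall>k1 k2. k1 \<le> k2 \<and> k2 \<le> K \<longrightarrow> Eff_lb s k1 \<le> Eff_lb s k2)"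
proof
  show "Eff_lb s K \<le> Eff s K"
    using assms(1,3,5,6) convex_on_nonneg_if_flat_at_0[OF assms(5,3,4)]
    by (intro Eff_lb_le_Eff) auto
  show "\<forall>k1 k2. k1 \<le> k2 \<and> k2 \<le> K \<longrightarrow> Eff_lb s k1 \<le> Eff_lb s k2"
    using Eff_lb_mono[OF assms(5,3)] assms(1) by auto
qed

end
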